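(* Let $X$ be a real-valued random process on $\mathbb{R}$ with stationary increments (with the relevant moments finite), let $\psi$ be a wavelet as described in the context, and suppose $X$ is time-reversible. Then for all $t,\tau\in\mathbb{R}$, all $j,a\in\mathbb{Z}$ and all $k,l\in\{1,2\}$, $$\mathbb{E}\{\rho_k(WX(t,j))\,\rho_l(WX(t-2^j\tau,j-a))^*\}=\mathbb{E}\{\rho_k(WX(t,j))^*\,\rho_l(WX(t+2^j\tau,j-a))\},$$ which the paper writes compactly as $\mathbb{E}\{\rho WX(t,j)\,\rho WX(t-2^j\tau,j-a)^*\}=\mathbb{E}\{\rho WX(t,j)^*\,\rho WX(t+2^j\tau,j-a)\}$ (a Hermitian symmetry in $\tau$ of the joint phase-modulus correlation matrix).
   Context: A wavelet $\psi:\mathbb{R}\to\mathbb{C}$ has fast decay away from $t=0$, zero average, $\int|\psi|^2=1$, and a real-valued Fourier transform $\widehat\psi$. For $j\in\mathbb{Z}$, $\psi_j(t)=2^{-j}\psi(2^{-j}t)$, and $WX(t,j)=X\star\psi_j(t)$ (these coefficients are stationary in $t$ when $X$ has stationary increments). For $z\in\mathbb{C}$, $\rho(z)=(\rho_1(z),\rho_2(z))=(z,|z|)$; $^*$ denotes complex conjugation. $X$ is time-reversible if the process $RX(t)=X(-t)$ has the same probability distribution as $X$. *)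

theory Defs
  imports "HOL-Probability.Probability"
begin

definition is_wavelet :: "(real \<Rightarrow> complex) \<Rightarrow> bool" where
  "is_wavelet psi \<longleftrightarrow>
     psi \<in> borel_measurable lborel \<and>
     (\<forall>n::nat. \<exists>C::real. \<forall>t. cmod (psi t) * (1 + \<bar>t\<bar>) ^ n \<le> C) \<and>
     integrable lborel psi \<and> (\<integral>t. psi t \<partial>lborel) = 0 \<and>
     (\<integral>t. (cmod (psi t))\<^sup>2 \<partial>lborel) = 1 \<and>
     (\<forall>w::real. Im (\<integral>t. psi t * cis (- w * t) \<partial>lborel) = 0)"

definition psi_j :: "(real \<Rightarrow> complex) \<Rightarrow> int \<Rightarrow> real \<Rightarrow> complex" where
  "psi_j psi j t = complex_of_real (2 powr (- real_of_int j)) * psi (2 powr (- real_of_int j) * t)"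

definition WX :: "('a \<Rightarrow> real \<Rightarrow> real) \<Rightarrow> (real \<Rightarrow> complex) \<Rightarrow> 'a \<Rightarrow> real \<Rightarrow> int \<Rightarrow> complex" where
  "WX X psi w t j = (\<integral>u. complex_of_real (X w u) * psi_j psi j (t - u) \<partial>lborel)"

definition rho :: "nat \<Rightarrow> complex \<Rightarrow> complex" where
  "rho k z = (if k = 1 then z else complex_of_real (cmod z))"

definition process_law :: "'a measure \<Rightarrow> ('a \<Rightarrow> real \<Rightarrow> real) \<Rightarrow> (real \<Rightarrow> real) measure" where
  "process_law M X = distr M (Pi\<^sub>M UNIV (\<lambda>_. borel)) X"

definition stationary_increments :: "'a measure \<Rightarrow> ('a \<Rightarrow> real \<Rightarrow> real) \<Rightarrow> bool" where
  "stationary_increments M X \<longleftrightarrow>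
     (\<forall>h. process_law M (\<lambda>w t. X w (t + h) - X w h) = process_law M (\<lambda>w t. X w t - X w 0))"

definition time_reversible :: "'a measure \<Rightarrow> ('a \<Rightarrow> real \<Rightarrow> real) \<Rightarrow> bool" where
  "time_reversible M X \<longleftrightarrow> process_law M (\<lambda>w t. X w (- t)) = process_law M X"

end

theory Submission
  imports Defs
begin

text \<open>
  Since the Fourier transform of psi is real, psi (- s) = cnj (psi s) almost everywhere (by Levy's
  uniqueness theorem), so reversing time conjugates the wavelet coefficients: the coefficient of
  X (- _) at (t, j) is cnj (WX (- t, j)). Since psi has zero mean, the coefficients of the increment
  process X (_ + h) - X h are WX (t + h, j). Time reversal followed by a shift by h = 2 t turns
  E [rho_k WX (t, j) cnj (rho_l WX (t - s, j - a))] into E [cnj (rho_k WX (t, j)) rho_l WX (t + s, j - a)].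

  Both steps need that the joint law of two pairings \<integral> X u * phi u du is determined by the law of X
  on the product sigma-algebra, although a pairing is not a measurable function of the path. For
  bounded processes Fubini's theorem turns mixed moments of pairings into expectations of measurable
  path functionals, and the Stone-Weierstrass theorem extends equality from polynomials to all
  continuous test functions. Clipping the process, and then cutting off the test function, reaches
  the test functions of quadratic growth needed here, by dominated convergence.
\<close>

section \<open>Fourier uniqueness\<close>

lemma integrable_mult_iexp:
  fixes g :: "real \<Rightarrow> complex"
  assumes g: "integrable lborel g"
  shows "integrable lborel (\<lambda>t. g t * iexp (w * t))"
proof -
  have [measurable]: "g \<in> borel_measurable borel" using g by auto
  show ?thesis by (rule Bochner_Integration.integrable_bound[OF g]) (auto simp: norm_mult)
qed

lemma nonneg_fourier_eq_imp_AE_eq: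
  fixes f g :: "real \<Rightarrow> real"
  assumes f: "integrable lborel f" "\<And>t. f t \<ge> 0"
    and g: "integrable lborel g" "\<And>t. g t \<ge> 0"
    and eq: "\<And>w. (\<integral>t. f t * iexp (w * t) \<partial>lborel) = (\<integral>t. g t * iexp (w * t) \<partial>lborel)"
  shows "AE t in lborel. f t = g t"
proof -
  have [measurable]: "f \<in> borel_measurable borel" "g \<in> borel_measurable borel" using f g by auto
  define c where "c = (\<integral>t. f t \<partial>lborel)"
  have c_g: "c = (\<integral>t. g t \<partial>lborel)"
    using eq[of 0] by (simp add: c_def)
  have "c \<ge> 0" unfolding c_def using f by simp
  then consider "c = 0" | "c > 0" by linarith
  then show ?thesis
  proof cases
    case 1
    have "AE t in lborel. f t = 0" using 1 f by (simp add: c_def integral_nonneg_eq_0_iff_AE)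
    moreover have "AE t in lborel. g t = 0" using 1 g by (simp add: c_g integral_nonneg_eq_0_iff_AE)
    ultimately show ?thesis by eventually_elim simp
  next
    case 2
    \<comment> \<open>Normalised by their common mass c, f and g are probability densities with equal
      characteristic functions.\<close>
    let ?\<mu> = "\<lambda>h. density lborel (\<lambda>t. ennreal (h t / c))"
    have distribution: "real_distribution (?\<mu> h)"
      if h: "integrable lborel h" "\<And>t. h t \<ge> 0" "(\<integral>t. h t \<partial>lborel) = c" for h
    proof -
      have [measurable]: "h \<in> borel_measurable borel" using h by auto
      have "emeasure (?\<mu> h) UNIV = ennreal (\<integral>t. h t / c \<partial>lborel)"
        by (simp add: emeasure_density nn_integral_eq_integral h 2 less_imp_le)
      also have "\<dots> = 1" using h 2 by simp
      finally show ?thesis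
        by (simp add: real_distribution_def real_distribution_axioms_def prob_spaceI)
    qed
    have char: "char (?\<mu> h) w = (\<integral>t. h t * iexp (w * t) \<partial>lborel) / c"
      if h: "integrable lborel h" "\<And>t. h t \<ge> 0" for h w
    proof -
      have [measurable]: "h \<in> borel_measurable borel" using h by auto
      have "char (?\<mu> h) w = (\<integral>t. (h t / c) *\<^sub>R iexp (w * t) \<partial>lborel)"
        unfolding char_def using h 2 by (subst integral_density) auto
      also have "\<dots> = (\<integral>t. h t * iexp (w * t) / c \<partial>lborel)"
        by (simp add: scaleR_conv_of_real)
      finally show ?thesis by simp
    qed
    have "?\<mu> f = ?\<mu> g"
      by (rule Levy_uniqueness[OF distribution distribution])
         (use f g c_def c_g char eq in auto)
    then have "AE t in lborel. ennreal (f t / c) = ennreal (g t / c)"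
      by (subst (asm) sigma_finite_measure.density_unique_iff[OF lborel.sigma_finite_measure_axioms]) auto
    then show ?thesis
      by eventually_elim (use f g 2 in \<open>simp add: ennreal_inj\<close>)
  qed
qed

lemma real_fourier_eq_0_imp_AE_0:
  fixes f :: "real \<Rightarrow> real"
  assumes f: "integrable lborel f"
    and zero: "\<And>w. (\<integral>t. f t * iexp (w * t) \<partial>lborel) = 0"
  shows "AE t in lborel. f t = 0"
proof -
  define fp where "fp t = max (f t) 0" for t
  define fn where "fn t = max (- f t) 0" for t
  have f_split: "f t = fp t - fn t" for t unfolding fp_def fn_def by auto
  have int: "integrable lborel fp" "integrable lborel fn"
    unfolding fp_def fn_def using f by auto
  have same_transform: "(\<integral>t. fp t * iexp (w * t) \<partial>lborel) = (\<integral>t. fn t * iexp (w * t) \<partial>lborel)" for w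
  proof -
    have "0 = (\<integral>t. fp t * iexp (w * t) - fn t * iexp (w * t) \<partial>lborel)"
      using zero[of w] by (simp add: f_split left_diff_distrib)
    also have "\<dots> = (\<integral>t. fp t * iexp (w * t) \<partial>lborel) - (\<integral>t. fn t * iexp (w * t) \<partial>lborel)"
      using int by (intro Bochner_Integration.integral_diff integrable_mult_iexp) auto
    finally show ?thesis by simp
  qed
  have "AE t in lborel. fp t = fn t"
    by (rule nonneg_fourier_eq_imp_AE_eq[OF int(1) _ int(2) _ same_transform]) (auto simp: fp_def fn_def)
  then show ?thesis by eventually_elim (auto simp: fp_def fn_def)
qed

lemma fourier_eq_0_imp_AE_0:
  fixes g :: "real \<Rightarrow> complex"
  assumes g: "integrable lborel g"
    and zero: "\<And>w. (\<integral>t. g t * iexp (w * t) \<partial>lborel) = 0"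
  shows "AE t in lborel. g t = 0"
proof -
  have zero_cnj: "(\<integral>t. cnj (g t) * iexp (w * t) \<partial>lborel) = 0" for w
  proof -
    have "(\<integral>t. cnj (g t) * iexp (w * t) \<partial>lborel) = (\<integral>t. cnj (g t * iexp (- w * t)) \<partial>lborel)"
      by (simp add: exp_cnj)
    then show ?thesis unfolding Bochner_Integration.integral_cnj zero by simp
  qed
  have int: "integrable lborel (\<lambda>t. g t * iexp (w * t))"
    "integrable lborel (\<lambda>t. cnj (g t) * iexp (w * t))" for w
    by (rule integrable_mult_iexp[OF g], rule integrable_mult_iexp[OF integrable_cnj[OF g]])
  have Re_eq: "Re z * e = (z * e + cnj z * e) / 2" for z e :: complex
    by (simp add: complex_add_cnj flip: distrib_right)
  have Im_eq: "Im z * e = (z * e - cnj z * e) / (2 * \<i>)" for z e :: complex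
  proof -
    have "z * e - cnj z * e = 2 * \<i> * (Im z * e)"
      by (simp add: complex_diff_cnj flip: left_diff_distrib)
    then show ?thesis by simp
  qed
  have "AE t in lborel. Re (g t) = 0"
  proof (rule real_fourier_eq_0_imp_AE_0)
    fix w
    have "(\<integral>t. Re (g t) * iexp (w * t) \<partial>lborel)
        = ((\<integral>t. g t * iexp (w * t) \<partial>lborel) + (\<integral>t. cnj (g t) * iexp (w * t) \<partial>lborel)) / 2"
      by (simp only: Re_eq integral_divide_zero Bochner_Integration.integral_add[OF int])
    also have "\<dots> = 0" by (simp only: zero zero_cnj) simp
    finally show "(\<integral>t. Re (g t) * iexp (w * t) \<partial>lborel) = 0" .
  qed (use g in auto)
  moreover have "AE t in lborel. Im (g t) = 0"
  proof (rule real_fourier_eq_0_imp_AE_0)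
    fix w
    have "(\<integral>t. Im (g t) * iexp (w * t) \<partial>lborel)
        = ((\<integral>t. g t * iexp (w * t) \<partial>lborel) - (\<integral>t. cnj (g t) * iexp (w * t) \<partial>lborel)) / (2 * \<i>)"
      by (simp only: Im_eq integral_divide_zero Bochner_Integration.integral_diff[OF int])
    also have "\<dots> = 0" by (simp only: zero zero_cnj) simp
    finally show "(\<integral>t. Im (g t) * iexp (w * t) \<partial>lborel) = 0" .
  qed (use g in auto)
  ultimately show ?thesis by eventually_elim (simp add: complex_eq_iff)
qed

lemma real_fourier_imp_hermitian:
  fixes psi :: "real \<Rightarrow> complex"
  assumes psi: "integrable lborel psi"
    and real: "\<And>w. Im (\<integral>t. psi t * cis (- w * t) \<partial>lborel) = 0"
  shows "AE s in lborel. psi (- s) = cnj (psi s)"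
proof -
  have [measurable]: "psi \<in> borel_measurable borel" using psi by auto
  have psi_reflected: "integrable lborel (\<lambda>s. psi (- s))"
    using lborel_integrable_real_affine[OF psi, of "-1" 0] by simp
  have "AE s in lborel. psi (- s) - cnj (psi s) = 0"
  proof (rule fourier_eq_0_imp_AE_0)
    show "integrable lborel (\<lambda>s. psi (- s) - cnj (psi s))"
      using psi psi_reflected by auto
    fix w
    define F where "F = (\<integral>t. psi t * cis (- w * t) \<partial>lborel)"
    have "F = (\<integral>t. psi (- t) * iexp (w * t) \<partial>lborel)"
      using lborel_integral_real_affine[of "-1" "\<lambda>t. psi t * iexp (- w * t)" 0]
      by (simp add: F_def cis_conv_exp)
    moreover have "cnj F = (\<integral>t. cnj (psi t) * iexp (w * t) \<partial>lborel)"
      by (simp add: F_def cis_conv_exp exp_cnj flip: Bochner_Integration.integral_cnj)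
    moreover have "(\<integral>t. (psi (- t) - cnj (psi t)) * iexp (w * t) \<partial>lborel)
        = (\<integral>t. psi (- t) * iexp (w * t) \<partial>lborel) - (\<integral>t. cnj (psi t) * iexp (w * t) \<partial>lborel)"
      unfolding left_diff_distrib using psi psi_reflected
      by (intro Bochner_Integration.integral_diff integrable_mult_iexp) auto
    ultimately have "(\<integral>t. (psi (- t) - cnj (psi t)) * iexp (w * t) \<partial>lborel) = F - cnj F"
      by simp
    also have "\<dots> = 0" using real[of w] by (simp add: F_def complex_eq_iff)
    finally show "(\<integral>t. (psi (- t) - cnj (psi t)) * iexp (w * t) \<partial>lborel) = 0" .
  qed
  then show ?thesis by simp
qed

section \<open>Processes with equal laws\<close>

abbreviation jointly_measurable :: "'a measure \<Rightarrow> ('a \<Rightarrow> real \<Rightarrow> real) \<Rightarrow> bool" where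
  "jointly_measurable M X \<equiv> (\<lambda>(w, t). X w t) \<in> borel_measurable (M \<Otimes>\<^sub>M lborel)"

lemma measurable_paths:
  assumes [measurable]: "jointly_measurable M X"
  shows "X \<in> M \<rightarrow>\<^sub>M Pi\<^sub>M UNIV (\<lambda>_. borel)"
  by (rule measurable_PiM_single') auto

lemma process_law_compose_eq:
  assumes X: "jointly_measurable M X" and X': "jointly_measurable M X'"
    and law: "process_law M X = process_law M X'"
    and [measurable]: "T \<in> borel_measurable borel"
  shows "process_law M (\<lambda>w t. T (X w t)) = process_law M (\<lambda>w t. T (X' w t))"
proof -
  have T_paths: "(\<lambda>y t. T (y t)) \<in> Pi\<^sub>M UNIV (\<lambda>_. borel) \<rightarrow>\<^sub>M Pi\<^sub>M UNIV (\<lambda>_::real. borel)"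
    by (rule measurable_PiM_single') auto
  have "process_law M (\<lambda>w t. T (Y w t))
      = distr (process_law M Y) (Pi\<^sub>M UNIV (\<lambda>_. borel)) (\<lambda>y t. T (y t))"
    if "jointly_measurable M Y" for Y
    unfolding process_law_def
    by (subst distr_distr[OF T_paths measurable_paths[OF that]]) (simp add: comp_def)
  then show ?thesis using X X' law by metis
qed

definition clip :: "real \<Rightarrow> real \<Rightarrow> real" where
  "clip c x = max (- c) (min c x)"

lemma clip_measurable[measurable]: "clip c \<in> borel_measurable borel"
  unfolding clip_def by measurable

lemma clip_id: "\<bar>x\<bar> \<le> c \<Longrightarrow> clip c x = x"
  unfolding clip_def by auto

lemma abs_clip_le_bound: "c \<ge> 0 \<Longrightarrow> \<bar>clip c x\<bar> \<le> c"
  unfolding clip_def by auto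

lemma abs_clip_le: "c \<ge> 0 \<Longrightarrow> \<bar>clip c x\<bar> \<le> \<bar>x\<bar>"
  unfolding clip_def by auto

lemma clip_tendsto: "(\<lambda>n. clip (real n) x) \<longlonglongrightarrow> x"
proof (rule tendsto_eventually)
  show "\<forall>\<^sub>F n in sequentially. clip (real n) x = x"
    by (rule eventually_sequentiallyI[of "nat \<lceil>\<bar>x\<bar>\<rceil>"]) (simp add: clip_id le_nat_iff)
qed

lemma norm_integral_scaleR_le:
  fixes y :: "real \<Rightarrow> real" and \<phi> :: "real \<Rightarrow> 'b::{banach, second_countable_topology}"
  assumes \<phi>: "integrable lborel \<phi>" and y: "\<And>u. \<bar>y u\<bar> \<le> c"
  shows "norm (\<integral>u. y u *\<^sub>R \<phi> u \<partial>lborel) \<le> c * (\<integral>u. norm (\<phi> u) \<partial>lborel)"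
proof (cases "integrable lborel (\<lambda>u. y u *\<^sub>R \<phi> u)")
  case True
  have "norm (\<integral>u. y u *\<^sub>R \<phi> u \<partial>lborel) \<le> (\<integral>u. norm (y u *\<^sub>R \<phi> u) \<partial>lborel)"
    by (rule integral_norm_bound)
  also have "\<dots> \<le> (\<integral>u. c * norm (\<phi> u) \<partial>lborel)"
  proof (rule integral_mono)
    show "integrable lborel (\<lambda>u. norm (y u *\<^sub>R \<phi> u))" using True by (rule integrable_norm)
    show "integrable lborel (\<lambda>u. c * norm (\<phi> u))" using \<phi> by (intro integrable_mult_right integrable_norm)
    show "norm (y u *\<^sub>R \<phi> u) \<le> c * norm (\<phi> u)" for u
      using y[of u] by (simp add: mult_right_mono)
  qed
  finally show ?thesis by simp
next
  case False
  moreover have "c \<ge> 0" using y[of 0] by simp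
  ultimately show ?thesis by (simp add: not_integrable_integral_eq)
qed

lemma bounded_prod_pairings:
  fixes Y :: "'a \<Rightarrow> real \<Rightarrow> real"
  assumes hs: "\<forall>h\<in>set hs. integrable lborel h" and Y: "\<And>w t. \<bar>Y w t\<bar> \<le> c"
  shows "\<exists>K. \<forall>w. \<bar>\<Prod>h\<leftarrow>hs. \<integral>u. Y w u * h u \<partial>lborel\<bar> \<le> K"
  using hs
proof (induction hs)
  case Nil
  then show ?case by auto
next
  case (Cons h hs)
  then obtain K where K: "\<And>w. \<bar>\<Prod>h\<leftarrow>hs. \<integral>u. Y w u * h u \<partial>lborel\<bar> \<le> K" by auto
  have "\<bar>\<Prod>h\<leftarrow>h # hs. \<integral>u. Y w u * h u \<partial>lborel\<bar> \<le> c * (\<integral>u. \<bar>h u\<bar> \<partial>lborel) * K" for w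
    using norm_integral_scaleR_le[of h "Y w" c] Cons.prems Y K[of w]
    by (simp add: abs_mult mult_mono')
  then show ?case by blast
qed

lemma measurable_prod_pairings:
  assumes [measurable]: "jointly_measurable M Y" and "\<forall>h\<in>set hs. integrable lborel h"
  shows "(\<lambda>w. \<Prod>h\<leftarrow>hs. \<integral>u. Y w u * h u \<partial>lborel) \<in> borel_measurable M"
  using assms(2) by (induction hs) auto

lemma (in prob_space) integral_mult_pairing_swap:
  fixes Y :: "'a \<Rightarrow> real \<Rightarrow> real" and G :: "'a \<Rightarrow> real"
  assumes [measurable]: "jointly_measurable M Y" "G \<in> borel_measurable M"
    and Y: "\<And>w t. \<bar>Y w t\<bar> \<le> c" and G: "\<And>w. \<bar>G w\<bar> \<le> B" and h: "integrable lborel h"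
  shows "(\<integral>w. G w * (\<integral>u. Y w u * h u \<partial>lborel) \<partial>M) = (\<integral>u. (\<integral>w. G w * Y w u \<partial>M) * h u \<partial>lborel)"
proof -
  interpret pair_sigma_finite M lborel
    by (intro pair_sigma_finite.intro sigma_finite_measure_axioms lborel.sigma_finite_measure_axioms)
  have [measurable]: "h \<in> borel_measurable borel" using h by auto
  have bound: "\<bar>G w * Y w u * h u\<bar> \<le> B * c * \<bar>h u\<bar>" for w u
    unfolding abs_mult using G[of w] Y[of w u]
    by (intro mult_right_mono mult_mono) auto
  have "integrable (M \<Otimes>\<^sub>M lborel) (\<lambda>(w, u). G w * Y w u * h u)"
  proof (rule Bochner_Integration.integrable_bound)
    show "integrable (M \<Otimes>\<^sub>M lborel) (\<lambda>x. B * c * \<bar>h (snd x)\<bar>)"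
      by (rule Fubini_integrable) (use h in auto)
    show "AE x in M \<Otimes>\<^sub>M lborel. norm ((\<lambda>(w, u). G w * Y w u * h u) x) \<le> norm (B * c * \<bar>h (snd x)\<bar>)"
      by (intro AE_I2) (auto split: prod.split intro: order_trans[OF bound abs_ge_self])
  qed measurable
  then have "(\<integral>w. \<integral>u. G w * Y w u * h u \<partial>lborel \<partial>M) = (\<integral>u. \<integral>w. G w * Y w u * h u \<partial>M \<partial>lborel)"
    by (rule Fubini_integral[symmetric])
  moreover have "(\<integral>u. G w * Y w u * h u \<partial>lborel) = G w * (\<integral>u. Y w u * h u \<partial>lborel)" for w
    by (simp add: mult.assoc)
  ultimately show ?thesis by simp
qed

locale equal_law_processes = prob_space M for M :: "'a measure" +
  fixes X X' :: "'a \<Rightarrow> real \<Rightarrow> real"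
  assumes X_measurable[measurable]: "jointly_measurable M X"
    and X'_measurable[measurable]: "jointly_measurable M X'"
    and same_law: "process_law M X = process_law M X'"
begin

lemma integral_path_functional_eq:
  fixes F :: "(real \<Rightarrow> real) \<Rightarrow> 'b::{banach, second_countable_topology}"
  assumes "F \<in> borel_measurable (Pi\<^sub>M UNIV (\<lambda>_. borel))"
  shows "(\<integral>w. F (X w) \<partial>M) = (\<integral>w. F (X' w) \<partial>M)"
  using integral_distr[OF measurable_paths[OF X_measurable] assms]
    integral_distr[OF measurable_paths[OF X'_measurable] assms] same_law
  unfolding process_law_def by simp

end

locale bounded_equal_law_processes = equal_law_processes +
  fixes c :: real
  assumes X_bounded: "\<And>w t. \<bar>X w t\<bar> \<le> c" and X'_bounded: "\<And>w t. \<bar>X' w t\<bar> \<le> c"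
begin

lemma integral_pairing_products_eq:
  assumes "F \<in> borel_measurable (Pi\<^sub>M UNIV (\<lambda>_. borel))" "\<And>y. \<bar>F y\<bar> \<le> B"
    and "\<forall>h\<in>set hs. integrable lborel h"
  shows "(\<integral>w. F (X w) * (\<Prod>h\<leftarrow>hs. \<integral>u. X w u * h u \<partial>lborel) \<partial>M)
       = (\<integral>w. F (X' w) * (\<Prod>h\<leftarrow>hs. \<integral>u. X' w u * h u \<partial>lborel) \<partial>M)"
  using assms
proof (induction hs arbitrary: F B)
  case Nil
  then show ?case using integral_path_functional_eq by simp
next
  case (Cons h hs)
  note F_measurable[measurable] = Cons.prems(1)
  have "c \<ge> 0" "B \<ge> 0" using X_bounded[of undefined 0] Cons.prems(2)[of undefined] by auto
  have swap: "(\<integral>w. F (Y w) * (\<Prod>h\<leftarrow>h # hs. \<integral>u. Y w u * h u \<partial>lborel) \<partial>M)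
      = (\<integral>u. (\<integral>w. F (Y w) * clip c (Y w u) * (\<Prod>h\<leftarrow>hs. \<integral>u. Y w u * h u \<partial>lborel) \<partial>M) * h u \<partial>lborel)"
    if [measurable]: "jointly_measurable M Y" and Y: "\<And>w t. \<bar>Y w t\<bar> \<le> c" for Y
  proof -
    have "\<exists>K. \<forall>w. \<bar>\<Prod>h\<leftarrow>hs. \<integral>u. Y w u * h u \<partial>lborel\<bar> \<le> K"
      using Cons.prems(3) Y by (intro bounded_prod_pairings) auto
    then obtain K where K: "\<And>w. \<bar>\<Prod>h\<leftarrow>hs. \<integral>u. Y w u * h u \<partial>lborel\<bar> \<le> K" by blast
    have "(\<lambda>w. \<Prod>h\<leftarrow>hs. \<integral>u. Y w u * h u \<partial>lborel) \<in> borel_measurable M"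
      using Cons.prems(3) by (intro measurable_prod_pairings[OF that(1)]) auto
    moreover have "(\<lambda>w. F (Y w)) \<in> borel_measurable M"
      using measurable_compose[OF measurable_paths[OF that(1)] F_measurable] .
    ultimately have "(\<integral>w. F (Y w) * (\<Prod>h\<leftarrow>hs. \<integral>u. Y w u * h u \<partial>lborel) * (\<integral>u. Y w u * h u \<partial>lborel) \<partial>M)
        = (\<integral>u. (\<integral>w. F (Y w) * (\<Prod>h\<leftarrow>hs. \<integral>u. Y w u * h u \<partial>lborel) * Y w u \<partial>M) * h u \<partial>lborel)"
      using Cons.prems K Y \<open>B \<ge> 0\<close>
      by (intro integral_mult_pairing_swap[where B = "B * K"]) (auto simp: abs_mult intro!: mult_mono)
    then show ?thesis by (simp add: clip_id Y ac_simps)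
  qed
  \<comment> \<open>On paths bounded by c the clipping is the identity, but it makes the new weight bounded.\<close>
  have "(\<integral>w. F (X w) * clip c (X w u) * (\<Prod>h\<leftarrow>hs. \<integral>u. X w u * h u \<partial>lborel) \<partial>M)
      = (\<integral>w. F (X' w) * clip c (X' w u) * (\<Prod>h\<leftarrow>hs. \<integral>u. X' w u * h u \<partial>lborel) \<partial>M)" for u
  proof -
    have "(\<lambda>y. F y * clip c (y u)) \<in> borel_measurable (Pi\<^sub>M UNIV (\<lambda>_. borel))"
      by measurable
    moreover have "\<bar>F y * clip c (y u)\<bar> \<le> B * c" for y
      unfolding abs_mult using \<open>c \<ge> 0\<close> \<open>B \<ge> 0\<close> by (intro mult_mono Cons.prems(2) abs_clip_le_bound) auto
    ultimately show ?thesis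
      using Cons.IH[of "\<lambda>y. F y * clip c (y u)" "B * c"] Cons.prems(3) by (simp add: ac_simps)
  qed
  then show ?case using swap[OF X_measurable X_bounded] swap[OF X'_measurable X'_bounded] by simp
qed

end

section \<open>Pairings of bounded processes\<close>

definition pairing :: "('a \<Rightarrow> real \<Rightarrow> real) \<Rightarrow> (real \<Rightarrow> complex) \<Rightarrow> 'a \<Rightarrow> complex" where
  "pairing X \<phi> w = (\<integral>u. complex_of_real (X w u) * \<phi> u \<partial>lborel)"

lemma pairing_measurable[measurable]:
  assumes "jointly_measurable M X" "\<phi> \<in> borel_measurable borel"
  shows "pairing X \<phi> \<in> borel_measurable M"
  unfolding pairing_def[abs_def] using assms by measurable

lemma integrable_bounded_path_mult:
  fixes \<phi> :: "real \<Rightarrow> complex"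
  assumes [measurable]: "jointly_measurable M X" and w: "w \<in> space M"
    and X: "\<And>u. \<bar>X w u\<bar> \<le> c" and \<phi>: "integrable lborel \<phi>"
  shows "integrable lborel (\<lambda>u. complex_of_real (X w u) * \<phi> u)"
proof (rule Bochner_Integration.integrable_bound)
  have "c \<ge> 0" using X[of 0] by simp
  show "integrable lborel (\<lambda>u. c * norm (\<phi> u))" using \<phi> by (intro integrable_mult_right integrable_norm)
  have [measurable]: "\<phi> \<in> borel_measurable borel" using \<phi> by auto
  show "(\<lambda>u. complex_of_real (X w u) * \<phi> u) \<in> borel_measurable lborel" using w by measurable
  show "AE u in lborel. norm (complex_of_real (X w u) * \<phi> u) \<le> norm (c * norm (\<phi> u))"
    using X \<open>c \<ge> 0\<close> by (intro AE_I2) (simp add: norm_mult mult_right_mono)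
qed

lemma bounded_linear_apply_pairings:
  fixes L :: "complex \<times> complex \<Rightarrow> real" and y :: "real \<Rightarrow> real" and \<phi>1 \<phi>2 :: "real \<Rightarrow> complex"
  assumes L: "bounded_linear L"
    and int1: "integrable lborel (\<lambda>u. complex_of_real (y u) * \<phi>1 u)"
    and int2: "integrable lborel (\<lambda>u. complex_of_real (y u) * \<phi>2 u)"
  shows "L (\<integral>u. complex_of_real (y u) * \<phi>1 u \<partial>lborel, \<integral>u. complex_of_real (y u) * \<phi>2 u \<partial>lborel)
       = (\<integral>u. y u * (L (\<phi>1 u, 0) + L (0, \<phi>2 u)) \<partial>lborel)"
proof -
  interpret L: bounded_linear L by (rule L)
  interpret L1: bounded_linear "\<lambda>z. L (z, 0)"
    using bounded_linear_compose[OF L bounded_linear_Pair[OF bounded_linear_ident bounded_linear_zero]] by simp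
  interpret L2: bounded_linear "\<lambda>z. L (0, z)"
    using bounded_linear_compose[OF L bounded_linear_Pair[OF bounded_linear_zero bounded_linear_ident]] by simp
  have split: "L (a, b) = L (a, 0) + L (0, b)" for a b
    using L.add[of "(a, 0)" "(0, b)"] by simp
  have scale1: "L (of_real x * z, 0) = x * L (z, 0)" and scale2: "L (0, of_real x * z) = x * L (0, z)" for x z
    using L1.scaleR[of x z] L2.scaleR[of x z] by (simp_all add: scaleR_conv_of_real)
  have first: "L (\<integral>u. complex_of_real (y u) * \<phi>1 u \<partial>lborel, 0) = (\<integral>u. y u * L (\<phi>1 u, 0) \<partial>lborel)"
    using integral_bounded_linear[OF L1.bounded_linear_axioms int1, symmetric] by (simp add: scale1)
  have second: "L (0, \<integral>u. complex_of_real (y u) * \<phi>2 u \<partial>lborel) = (\<integral>u. y u * L (0, \<phi>2 u) \<partial>lborel)"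
    using integral_bounded_linear[OF L2.bounded_linear_axioms int2, symmetric] by (simp add: scale2)
  have "integrable lborel (\<lambda>u. y u * L (\<phi>1 u, 0))" "integrable lborel (\<lambda>u. y u * L (0, \<phi>2 u))"
    using integrable_bounded_linear[OF L1.bounded_linear_axioms int1]
      integrable_bounded_linear[OF L2.bounded_linear_axioms int2] by (simp_all add: scale1 scale2)
  from Bochner_Integration.integral_add[OF this] show ?thesis
    unfolding split[of "\<integral>u. complex_of_real (y u) * \<phi>1 u \<partial>lborel"
        "\<integral>u. complex_of_real (y u) * \<phi>2 u \<partial>lborel"] first second
    by (simp add: distrib_left)
qed

lemma continuous_on_bounded_on_cball:
  fixes q :: "'b::euclidean_space \<Rightarrow> real"
  assumes "continuous_on UNIV q"
  obtains Q where "\<And>z. norm z \<le> R \<Longrightarrow> \<bar>q z\<bar> \<le> Q"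
proof -
  have "bounded (q ` cball 0 R)"
    by (intro compact_imp_bounded compact_continuous_image continuous_on_subset[OF assms]) auto
  then obtain Q where "\<forall>x\<in>q ` cball 0 R. norm x \<le> Q" unfolding bounded_iff by blast
  then show ?thesis using that[of Q] by simp
qed

lemma (in prob_space) abs_integral_le_const:
  assumes "integrable M f" "\<And>w. w \<in> space M \<Longrightarrow> \<bar>f w\<bar> \<le> (e::real)"
  shows "\<bar>\<integral>w. f w \<partial>M\<bar> \<le> e"
proof -
  have "\<bar>\<integral>w. f w \<partial>M\<bar> \<le> (\<integral>w. \<bar>f w\<bar> \<partial>M)" by (rule integral_abs_bound)
  also have "\<dots> \<le> (\<integral>w. e \<partial>M)" using assms by (intro integral_mono) auto
  finally show ?thesis by (simp add: prob_space)
qed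

context bounded_equal_law_processes
begin

context
  fixes \<phi>1 \<phi>2 :: "real \<Rightarrow> complex"
  assumes \<phi>1: "integrable lborel \<phi>1" and \<phi>2: "integrable lborel \<phi>2"
begin

definition pairings :: "('a \<Rightarrow> real \<Rightarrow> real) \<Rightarrow> 'a \<Rightarrow> complex \<times> complex" where
  "pairings Y w = (pairing Y \<phi>1 w, pairing Y \<phi>2 w)"

definition weighted_moment :: "('a \<Rightarrow> real \<Rightarrow> real) \<Rightarrow> (complex \<times> complex \<Rightarrow> real) \<Rightarrow> (real \<Rightarrow> real) list \<Rightarrow> real" where
  "weighted_moment Y q hs = (\<integral>w. q (pairings Y w) * (\<Prod>h\<leftarrow>hs. \<integral>u. Y w u * h u \<partial>lborel) \<partial>M)"

text \<open>Quantifying over all weight lists hs makes the class closed under multiplication by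
  linear forms, which turn into one more pairing; hence it contains all polynomials.\<close>

definition moment_invariant :: "(complex \<times> complex \<Rightarrow> real) \<Rightarrow> bool" where
  "moment_invariant q \<longleftrightarrow> continuous_on UNIV q \<and>
     (\<forall>hs. (\<forall>h\<in>set hs. integrable lborel h) \<longrightarrow> weighted_moment X q hs = weighted_moment X' q hs)"

lemma norm_pairings_le:
  assumes "\<And>w t. \<bar>Y w t\<bar> \<le> c"
  shows "norm (pairings Y w) \<le> c * ((\<integral>u. norm (\<phi>1 u) \<partial>lborel) + (\<integral>u. norm (\<phi>2 u) \<partial>lborel))"
proof -
  have "norm (pairings Y w) \<le> norm (pairing Y \<phi>1 w) + norm (pairing Y \<phi>2 w)"
    unfolding pairings_def by (rule norm_Pair_le)
  also have "\<dots> \<le> c * (\<integral>u. norm (\<phi>1 u) \<partial>lborel) + c * (\<integral>u. norm (\<phi>2 u) \<partial>lborel)"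
    using norm_integral_scaleR_le[OF \<phi>1, of "Y w" c] norm_integral_scaleR_le[OF \<phi>2, of "Y w" c] assms
    by (simp add: add_mono pairing_def scaleR_conv_of_real)
  finally show ?thesis by (simp add: distrib_left)
qed

lemma integrable_weighted_moment:
  assumes [measurable]: "jointly_measurable M Y" and Y: "\<And>w t. \<bar>Y w t\<bar> \<le> c"
    and q: "continuous_on UNIV q" and hs: "\<forall>h\<in>set hs. integrable lborel h"
  shows "integrable M (\<lambda>w. q (pairings Y w) * (\<Prod>h\<leftarrow>hs. \<integral>u. Y w u * h u \<partial>lborel))"
proof -
  have "\<exists>K. \<forall>w. \<bar>\<Prod>h\<leftarrow>hs. \<integral>u. Y w u * h u \<partial>lborel\<bar> \<le> K"
    using hs Y by (intro bounded_prod_pairings) auto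
  then obtain K where K: "\<And>w. \<bar>\<Prod>h\<leftarrow>hs. \<integral>u. Y w u * h u \<partial>lborel\<bar> \<le> K" by blast
  obtain Q where "\<And>z. norm z \<le> c * ((\<integral>u. norm (\<phi>1 u) \<partial>lborel) + (\<integral>u. norm (\<phi>2 u) \<partial>lborel)) \<Longrightarrow> \<bar>q z\<bar> \<le> Q"
    using continuous_on_bounded_on_cball[OF q] by blast
  then have Q: "\<bar>q (pairings Y w)\<bar> \<le> Q" for w
    using norm_pairings_le[of Y w] Y by blast
  show ?thesis
  proof (rule integrable_const_bound[where B = "Q * K"])
    have [measurable]: "\<phi>1 \<in> borel_measurable borel" "\<phi>2 \<in> borel_measurable borel" using \<phi>1 \<phi>2 by auto
    have "pairings Y \<in> borel_measurable M" unfolding pairings_def[abs_def] by measurable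
    then have "(\<lambda>w. q (pairings Y w)) \<in> borel_measurable M"
      by (rule measurable_compose[OF _ borel_measurable_continuous_onI[OF q]])
    with measurable_prod_pairings[OF assms(1) hs]
    show "(\<lambda>w. q (pairings Y w) * (\<Prod>h\<leftarrow>hs. \<integral>u. Y w u * h u \<partial>lborel)) \<in> borel_measurable M"
      by (intro borel_measurable_times)
    show "AE w in M. norm (q (pairings Y w) * (\<Prod>h\<leftarrow>hs. \<integral>u. Y w u * h u \<partial>lborel)) \<le> Q * K"
      unfolding real_norm_def abs_mult using Q K
      by (intro AE_I2 mult_mono) (auto intro: order_trans[OF abs_ge_zero Q])
  qed
qed


lemma moment_invariant_one: "moment_invariant (\<lambda>_. 1)"
  unfolding moment_invariant_def weighted_moment_def
  using integral_pairing_products_eq[of "\<lambda>_. 1" 1] by simp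

lemma weighted_moment_linear_mult:
  assumes [measurable]: "jointly_measurable M Y" and Y: "\<And>w t. \<bar>Y w t\<bar> \<le> c"
    and L: "bounded_linear L"
  shows "weighted_moment Y (\<lambda>z. L z * q z) hs
       = weighted_moment Y q ((\<lambda>u. L (\<phi>1 u, 0) + L (0, \<phi>2 u)) # hs)"
  unfolding weighted_moment_def
proof (intro Bochner_Integration.integral_cong refl)
  fix w assume "w \<in> space M"
  then have "L (pairings Y w) = (\<integral>u. Y w u * (L (\<phi>1 u, 0) + L (0, \<phi>2 u)) \<partial>lborel)"
    unfolding pairings_def pairing_def using Y
    by (intro bounded_linear_apply_pairings L integrable_bounded_path_mult[where X = Y] \<phi>1 \<phi>2) auto
  then show "L (pairings Y w) * q (pairings Y w) * (\<Prod>h\<leftarrow>hs. \<integral>u. Y w u * h u \<partial>lborel)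
      = q (pairings Y w) * (\<Prod>h\<leftarrow>(\<lambda>u. L (\<phi>1 u, 0) + L (0, \<phi>2 u)) # hs. \<integral>u. Y w u * h u \<partial>lborel)"
    by simp
qed

lemma moment_invariant_linear_mult:
  assumes L: "bounded_linear L" and q: "moment_invariant q"
  shows "moment_invariant (\<lambda>z. L z * q z)"
  unfolding moment_invariant_def
proof (intro conjI allI impI)
  show "continuous_on UNIV (\<lambda>z. L z * q z)"
    using q unfolding moment_invariant_def by (intro continuous_on_mult[OF linear_continuous_on[OF L]]) auto
  have "bounded_linear (\<lambda>z. L (z, 0))" "bounded_linear (\<lambda>z. L (0, z))"
    using bounded_linear_compose[OF L bounded_linear_Pair[OF bounded_linear_ident bounded_linear_zero]]
      bounded_linear_compose[OF L bounded_linear_Pair[OF bounded_linear_zero bounded_linear_ident]]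
    by simp_all
  then have "integrable lborel (\<lambda>u. L (\<phi>1 u, 0) + L (0, \<phi>2 u))"
    by (intro Bochner_Integration.integrable_add integrable_bounded_linear[OF _ \<phi>1] integrable_bounded_linear[OF _ \<phi>2])
  moreover fix hs :: "(real \<Rightarrow> real) list"
  assume "\<forall>h\<in>set hs. integrable lborel h"
  ultimately have "weighted_moment X q ((\<lambda>u. L (\<phi>1 u, 0) + L (0, \<phi>2 u)) # hs)
      = weighted_moment X' q ((\<lambda>u. L (\<phi>1 u, 0) + L (0, \<phi>2 u)) # hs)"
    using q unfolding moment_invariant_def by simp
  then show "weighted_moment X (\<lambda>z. L z * q z) hs = weighted_moment X' (\<lambda>z. L z * q z) hs"
    by (simp only: weighted_moment_linear_mult[OF X_measurable X_bounded L]
        weighted_moment_linear_mult[OF X'_measurable X'_bounded L])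
qed

lemma moment_invariant_scale:
  assumes "moment_invariant q"
  shows "moment_invariant (\<lambda>z. a * q z)"
proof -
  have "weighted_moment Y (\<lambda>z. a * q z) hs = a * weighted_moment Y q hs" for Y hs
    unfolding weighted_moment_def by (simp add: mult.assoc)
  with assms show ?thesis
    unfolding moment_invariant_def by (simp add: continuous_on_mult_left)
qed

lemma moment_invariant_add:
  assumes q1: "moment_invariant q1" and q2: "moment_invariant q2"
  shows "moment_invariant (\<lambda>z. q1 z + q2 z)"
proof -
  have cont: "continuous_on UNIV q1" "continuous_on UNIV q2"
    using q1 q2 unfolding moment_invariant_def by auto
  have split: "weighted_moment Y (\<lambda>z. q1 z + q2 z) hs = weighted_moment Y q1 hs + weighted_moment Y q2 hs"
    if "jointly_measurable M Y" "\<And>w t. \<bar>Y w t\<bar> \<le> c" "\<forall>h\<in>set hs. integrable lborel h" for Y hs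
    unfolding weighted_moment_def distrib_right
    using integrable_weighted_moment[OF that(1,2) cont(1) that(3)]
      integrable_weighted_moment[OF that(1,2) cont(2) that(3)]
    by (rule Bochner_Integration.integral_add)
  show ?thesis
    unfolding moment_invariant_def
  proof (intro conjI allI impI)
    show "continuous_on UNIV (\<lambda>z. q1 z + q2 z)" using cont by (rule continuous_on_add)
    fix hs :: "(real \<Rightarrow> real) list"
    assume "\<forall>h\<in>set hs. integrable lborel h"
    with q1 q2 show "weighted_moment X (\<lambda>z. q1 z + q2 z) hs = weighted_moment X' (\<lambda>z. q1 z + q2 z) hs"
      unfolding moment_invariant_def
      by (simp only: split[OF X_measurable X_bounded] split[OF X'_measurable X'_bounded])
  qed
qed

lemma moment_invariant_polynomial_mult:
  assumes "real_polynomial_function p" "moment_invariant q"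
  shows "moment_invariant (\<lambda>z. p z * q z)"
  using assms
proof (induction p arbitrary: q rule: real_polynomial_function.induct)
  case (linear f)
  then show ?case by (rule moment_invariant_linear_mult)
next
  case (const a)
  then show ?case by (rule moment_invariant_scale)
next
  case (add f g)
  then show ?case by (simp add: distrib_right moment_invariant_add)
next
  case (mult f g)
  then show ?case by (simp add: mult.assoc)
qed

lemma integral_polynomial_pairings_eq:
  assumes "real_polynomial_function p"
  shows "(\<integral>w. p (pairings X w) \<partial>M) = (\<integral>w. p (pairings X' w) \<partial>M)"
proof -
  have "weighted_moment X (\<lambda>z. p z * 1) [] = weighted_moment X' (\<lambda>z. p z * 1) []"
    using moment_invariant_polynomial_mult[OF assms moment_invariant_one]
    unfolding moment_invariant_def by simp
  then show ?thesis unfolding weighted_moment_def by simp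
qed

lemma integral_continuous_pairings_eq:
  fixes g :: "complex \<times> complex \<Rightarrow> real"
  assumes g: "continuous_on UNIV g"
  shows "(\<integral>w. g (pairing X \<phi>1 w, pairing X \<phi>2 w) \<partial>M) = (\<integral>w. g (pairing X' \<phi>1 w, pairing X' \<phi>2 w) \<partial>M)"
proof -
  let ?A = "\<integral>w. g (pairings X w) \<partial>M" and ?B = "\<integral>w. g (pairings X' w) \<partial>M"
  define R where "R = c * ((\<integral>u. norm (\<phi>1 u) \<partial>lborel) + (\<integral>u. norm (\<phi>2 u) \<partial>lborel))"
  have integrable: "integrable M (\<lambda>w. f (pairings Y w))"
    if "jointly_measurable M Y" "\<And>w t. \<bar>Y w t\<bar> \<le> c" "continuous_on UNIV f"
    for Y and f :: "complex \<times> complex \<Rightarrow> real"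
    using integrable_weighted_moment[of Y f "[]"] that by simp
  \<comment> \<open>The pairings of both processes stay in the ball of radius R, where g is uniformly
    approximated by polynomials.\<close>
  have approximation: "\<bar>?A - ?B\<bar> \<le> 2 * e" if "e > 0" for e
  proof -
    obtain p where p: "real_polynomial_function p" and approx: "\<And>z. z \<in> cball 0 R \<Longrightarrow> \<bar>g z - p z\<bar> < e"
      using Stone_Weierstrass_real_polynomial_function[OF compact_cball continuous_on_subset[OF g] \<open>e > 0\<close>]
      by blast
    have "continuous_on UNIV p"
      using p by (simp add: real_polynomial_function_eq continuous_on_polymonial_function)
    have close: "\<bar>(\<integral>w. g (pairings Y w) \<partial>M) - (\<integral>w. p (pairings Y w) \<partial>M)\<bar> \<le> e"
      if "jointly_measurable M Y" "\<And>w t. \<bar>Y w t\<bar> \<le> c" for Y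
    proof -
      note int = integrable[OF that g] integrable[OF that \<open>continuous_on UNIV p\<close>]
      have "(\<integral>w. g (pairings Y w) \<partial>M) - (\<integral>w. p (pairings Y w) \<partial>M)
          = (\<integral>w. g (pairings Y w) - p (pairings Y w) \<partial>M)"
        by (rule Bochner_Integration.integral_diff[symmetric, OF int])
      also have "\<bar>\<dots>\<bar> \<le> e"
      proof (rule abs_integral_le_const)
        show "integrable M (\<lambda>w. g (pairings Y w) - p (pairings Y w))" using int by auto
        fix w
        have "pairings Y w \<in> cball 0 R" using norm_pairings_le[OF that(2)] by (simp add: R_def)
        from approx[OF this] show "\<bar>g (pairings Y w) - p (pairings Y w)\<bar> \<le> e" by simp
      qed
      finally show ?thesis .
    qed
    show ?thesis
      using close[OF X_measurable X_bounded] close[OF X'_measurable X'_bounded]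
        integral_polynomial_pairings_eq[OF p]
      by linarith
  qed
  have "\<bar>?A - ?B\<bar> \<le> 0"
  proof (rule field_le_epsilon)
    fix e :: real
    assume "e > 0"
    then show "\<bar>?A - ?B\<bar> \<le> 0 + e" using approximation[of "e / 2"] by simp
  qed
  then show ?thesis by (simp add: pairings_def)
qed

end

end

section \<open>Pairings of unbounded processes\<close>

lemma pairing_clip_tendsto:
  assumes [measurable]: "jointly_measurable M X" "\<phi> \<in> borel_measurable borel"
    and w: "w \<in> space M" and int: "integrable lborel (\<lambda>u. complex_of_real (X w u) * \<phi> u)"
  shows "(\<lambda>n. pairing (\<lambda>w t. clip (real n) (X w t)) \<phi> w) \<longlonglongrightarrow> pairing X \<phi> w"
  unfolding pairing_def
proof (rule integral_dominated_convergence[where w = "\<lambda>u. norm (complex_of_real (X w u) * \<phi> u)"])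
  show "(\<lambda>u. complex_of_real (clip (real n) (X w u)) * \<phi> u) \<in> borel_measurable lborel" for n
    using w by measurable
  show "AE u in lborel. (\<lambda>n. complex_of_real (clip (real n) (X w u)) * \<phi> u) \<longlonglongrightarrow> complex_of_real (X w u) * \<phi> u"
    by (intro AE_I2 tendsto_mult tendsto_of_real clip_tendsto tendsto_const)
  show "AE u in lborel. norm (complex_of_real (clip (real n) (X w u)) * \<phi> u) \<le> norm (complex_of_real (X w u) * \<phi> u)" for n
    by (intro AE_I2) (simp add: norm_mult mult_right_mono abs_clip_le)
qed (use int in auto)

lemma (in prob_space) integral_clip_pairings_tendsto:
  fixes g :: "complex \<times> complex \<Rightarrow> 'b::{banach, second_countable_topology}"
  assumes [measurable]: "jointly_measurable M Y"
    and \<phi>1: "integrable lborel \<phi>1" and \<phi>2: "integrable lborel \<phi>2"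
    and Y1: "\<And>w. w \<in> space M \<Longrightarrow> integrable lborel (\<lambda>u. complex_of_real (Y w u) * \<phi>1 u)"
    and Y2: "\<And>w. w \<in> space M \<Longrightarrow> integrable lborel (\<lambda>u. complex_of_real (Y w u) * \<phi>2 u)"
    and g: "continuous_on UNIV g" and bounded: "\<And>z. norm (g z) \<le> G"
  shows "(\<lambda>n. \<integral>w. g (pairing (\<lambda>w t. clip (real n) (Y w t)) \<phi>1 w, pairing (\<lambda>w t. clip (real n) (Y w t)) \<phi>2 w) \<partial>M)
      \<longlonglongrightarrow> (\<integral>w. g (pairing Y \<phi>1 w, pairing Y \<phi>2 w) \<partial>M)"
proof (rule integral_dominated_convergence[where w = "\<lambda>_. G"])
  have [measurable]: "\<phi>1 \<in> borel_measurable borel" "\<phi>2 \<in> borel_measurable borel"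
    and g_measurable[measurable]: "g \<in> borel_measurable borel"
    using \<phi>1 \<phi>2 g by (auto intro: borel_measurable_continuous_onI)
  show "(\<lambda>w. g (pairing Y \<phi>1 w, pairing Y \<phi>2 w)) \<in> borel_measurable M"
    by measurable
  show "(\<lambda>w. g (pairing (\<lambda>w t. clip (real n) (Y w t)) \<phi>1 w, pairing (\<lambda>w t. clip (real n) (Y w t)) \<phi>2 w))
      \<in> borel_measurable M" for n
    by measurable
  show "AE w in M. (\<lambda>n. g (pairing (\<lambda>w t. clip (real n) (Y w t)) \<phi>1 w, pairing (\<lambda>w t. clip (real n) (Y w t)) \<phi>2 w))
      \<longlonglongrightarrow> g (pairing Y \<phi>1 w, pairing Y \<phi>2 w)"
  proof (rule AE_I2)
    fix w assume "w \<in> space M"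
    with Y1 Y2 show "(\<lambda>n. g (pairing (\<lambda>w t. clip (real n) (Y w t)) \<phi>1 w, pairing (\<lambda>w t. clip (real n) (Y w t)) \<phi>2 w))
      \<longlonglongrightarrow> g (pairing Y \<phi>1 w, pairing Y \<phi>2 w)"
      by (intro continuous_on_tendsto_compose[OF g] tendsto_Pair pairing_clip_tendsto) auto
  qed
qed (use bounded in auto)

definition cutoff :: "nat \<Rightarrow> 'a::real_normed_vector \<Rightarrow> real" where
  "cutoff n z = max 0 (min 1 (real n - norm z))"

lemma continuous_on_cutoff: "continuous_on UNIV (cutoff n)"
  unfolding cutoff_def[abs_def] by (intro continuous_intros)

lemma cutoff_nonneg: "0 \<le> cutoff n z" and cutoff_le_one: "cutoff n z \<le> 1"
  unfolding cutoff_def by auto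

lemma cutoff_eq_0: "real n \<le> norm z \<Longrightarrow> cutoff n z = 0"
  unfolding cutoff_def by auto

lemma cutoff_tendsto: "(\<lambda>n. cutoff n z) \<longlonglongrightarrow> 1"
proof (rule tendsto_eventually)
  show "\<forall>\<^sub>F n in sequentially. cutoff n z = 1"
  proof (rule eventually_sequentiallyI[of "nat \<lceil>norm z + 1\<rceil>"])
    fix n
    assume "nat \<lceil>norm z + 1\<rceil> \<le> n"
    then have "norm z + 1 \<le> real n" by linarith
    then show "cutoff n z = 1" unfolding cutoff_def by auto
  qed
qed

context equal_law_processes
begin

context
  fixes \<phi>1 \<phi>2 :: "real \<Rightarrow> complex"
  assumes \<phi>1: "integrable lborel \<phi>1" and \<phi>2: "integrable lborel \<phi>2"
    and X1: "\<And>w. w \<in> space M \<Longrightarrow> integrable lborel (\<lambda>u. complex_of_real (X w u) * \<phi>1 u)"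
    and X2: "\<And>w. w \<in> space M \<Longrightarrow> integrable lborel (\<lambda>u. complex_of_real (X w u) * \<phi>2 u)"
    and X'1: "\<And>w. w \<in> space M \<Longrightarrow> integrable lborel (\<lambda>u. complex_of_real (X' w u) * \<phi>1 u)"
    and X'2: "\<And>w. w \<in> space M \<Longrightarrow> integrable lborel (\<lambda>u. complex_of_real (X' w u) * \<phi>2 u)"
begin

lemma integral_bounded_continuous_pairings_eq_real:
  fixes g :: "complex \<times> complex \<Rightarrow> real"
  assumes g: "continuous_on UNIV g" and bounded: "\<And>z. \<bar>g z\<bar> \<le> G"
  shows "(\<integral>w. g (pairing X \<phi>1 w, pairing X \<phi>2 w) \<partial>M) = (\<integral>w. g (pairing X' \<phi>1 w, pairing X' \<phi>2 w) \<partial>M)"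
proof -
  have clipped: "(\<integral>w. g (pairing (\<lambda>w t. clip (real n) (X w t)) \<phi>1 w, pairing (\<lambda>w t. clip (real n) (X w t)) \<phi>2 w) \<partial>M)
     = (\<integral>w. g (pairing (\<lambda>w t. clip (real n) (X' w t)) \<phi>1 w, pairing (\<lambda>w t. clip (real n) (X' w t)) \<phi>2 w) \<partial>M)" for n
  proof -
    interpret clipped: bounded_equal_law_processes M
      "\<lambda>w t. clip (real n) (X w t)" "\<lambda>w t. clip (real n) (X' w t)" "real n"
      by unfold_locales
        (auto intro: process_law_compose_eq[OF X_measurable X'_measurable same_law] abs_clip_le_bound)
    show ?thesis by (rule clipped.integral_continuous_pairings_eq[OF \<phi>1 \<phi>2 g])
  qed
  show ?thesis
    using integral_clip_pairings_tendsto[OF X_measurable \<phi>1 \<phi>2 X1 X2 g, of G]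
      integral_clip_pairings_tendsto[OF X'_measurable \<phi>1 \<phi>2 X'1 X'2 g, of G] bounded
    unfolding clipped by (auto intro: LIMSEQ_unique)
qed

lemma integral_bounded_continuous_pairings_eq:
  fixes g :: "complex \<times> complex \<Rightarrow> complex"
  assumes g: "continuous_on UNIV g" and bounded: "\<And>z. norm (g z) \<le> G"
  shows "(\<integral>w. g (pairing X \<phi>1 w, pairing X \<phi>2 w) \<partial>M) = (\<integral>w. g (pairing X' \<phi>1 w, pairing X' \<phi>2 w) \<partial>M)"
proof -
  have [measurable]: "\<phi>1 \<in> borel_measurable borel" "\<phi>2 \<in> borel_measurable borel" "g \<in> borel_measurable borel"
    using \<phi>1 \<phi>2 g by (auto intro: borel_measurable_continuous_onI)
  have integrable: "integrable M (\<lambda>w. g (pairing Y \<phi>1 w, pairing Y \<phi>2 w))"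
    if [measurable]: "jointly_measurable M Y" for Y
    by (rule integrable_const_bound[where B = G]) (use bounded in auto)
  have "(\<integral>w. Re (g (pairing X \<phi>1 w, pairing X \<phi>2 w)) \<partial>M) = (\<integral>w. Re (g (pairing X' \<phi>1 w, pairing X' \<phi>2 w)) \<partial>M)"
    by (intro integral_bounded_continuous_pairings_eq_real[where G = G])
       (auto intro: continuous_intros g order_trans[OF abs_Re_le_cmod bounded])
  moreover have "(\<integral>w. Im (g (pairing X \<phi>1 w, pairing X \<phi>2 w)) \<partial>M) = (\<integral>w. Im (g (pairing X' \<phi>1 w, pairing X' \<phi>2 w)) \<partial>M)"
    by (intro integral_bounded_continuous_pairings_eq_real[where G = G])
       (auto intro: continuous_intros g order_trans[OF abs_Im_le_cmod bounded])
  ultimately show ?thesis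
    by (simp add: complex_eq_iff integrable X_measurable X'_measurable)
qed

lemma integral_quadratic_growth_pairings_eq:
  fixes g :: "complex \<times> complex \<Rightarrow> complex"
  assumes X1_square: "integrable M (\<lambda>w. (norm (pairing X \<phi>1 w))\<^sup>2)"
    and X2_square: "integrable M (\<lambda>w. (norm (pairing X \<phi>2 w))\<^sup>2)"
    and X'1_square: "integrable M (\<lambda>w. (norm (pairing X' \<phi>1 w))\<^sup>2)"
    and X'2_square: "integrable M (\<lambda>w. (norm (pairing X' \<phi>2 w))\<^sup>2)"
    and g: "continuous_on UNIV g"
    and growth: "\<And>a b. norm (g (a, b)) \<le> C * ((norm a)\<^sup>2 + (norm b)\<^sup>2)"
  shows "(\<integral>w. g (pairing X \<phi>1 w, pairing X \<phi>2 w) \<partial>M) = (\<integral>w. g (pairing X' \<phi>1 w, pairing X' \<phi>2 w) \<partial>M)"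
proof -
  have [measurable]: "\<phi>1 \<in> borel_measurable borel" "\<phi>2 \<in> borel_measurable borel" "g \<in> borel_measurable borel"
    using \<phi>1 \<phi>2 g by (auto intro: borel_measurable_continuous_onI)
  define g_n where "g_n n z = complex_of_real (cutoff n z) * g z" for n z
  have g_n_continuous: "continuous_on UNIV (g_n n)" for n
    unfolding g_n_def[abs_def] using continuous_on_cutoff[of n] g by (intro continuous_intros) auto
  have [measurable]: "g_n n \<in> borel_measurable borel" for n
    using g_n_continuous by (rule borel_measurable_continuous_onI)
  have g_n_le: "norm (g_n n z) \<le> norm (g z)" for n z
    unfolding g_n_def norm_mult using cutoff_nonneg[of n z] cutoff_le_one[of n z]
    by (simp add: mult_left_le_one_le)
  have g_n_tendsto: "(\<lambda>n. g_n n z) \<longlonglongrightarrow> g z" for z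
    using tendsto_mult[OF tendsto_of_real[OF cutoff_tendsto[of z]] tendsto_const[of "g z"]]
    by (simp add: g_n_def)
  have g_n_bounded: "norm (g_n n z) \<le> \<bar>C\<bar> * (2 * (real n)\<^sup>2)" for n z
  proof (cases "real n \<le> norm z")
    case True
    then show ?thesis by (simp add: g_n_def cutoff_eq_0)
  next
    case False
    obtain a b where z: "z = (a, b)" by (cases z)
    have "norm a \<le> real n" "norm b \<le> real n"
      using False norm_fst_le[of a b] norm_snd_le[of b a] unfolding z by linarith+
    then have "(norm a)\<^sup>2 \<le> (real n)\<^sup>2" "(norm b)\<^sup>2 \<le> (real n)\<^sup>2"
      by (auto intro: power_mono)
    then have "(norm a)\<^sup>2 + (norm b)\<^sup>2 \<le> 2 * (real n)\<^sup>2" by linarith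
    then have "C * ((norm a)\<^sup>2 + (norm b)\<^sup>2) \<le> \<bar>C\<bar> * (2 * (real n)\<^sup>2)"
      by (intro mult_mono) auto
    with growth[of a b] have "norm (g z) \<le> \<bar>C\<bar> * (2 * (real n)\<^sup>2)"
      unfolding z by linarith
    with g_n_le show ?thesis by (rule order_trans)
  qed
  have eq: "(\<integral>w. g_n n (pairing X \<phi>1 w, pairing X \<phi>2 w) \<partial>M) = (\<integral>w. g_n n (pairing X' \<phi>1 w, pairing X' \<phi>2 w) \<partial>M)" for n
    by (rule integral_bounded_continuous_pairings_eq[OF g_n_continuous g_n_bounded])
  have limit: "(\<lambda>n. \<integral>w. g_n n (pairing Y \<phi>1 w, pairing Y \<phi>2 w) \<partial>M) \<longlonglongrightarrow> (\<integral>w. g (pairing Y \<phi>1 w, pairing Y \<phi>2 w) \<partial>M)"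
    if [measurable]: "jointly_measurable M Y"
      and square: "integrable M (\<lambda>w. (norm (pairing Y \<phi>1 w))\<^sup>2)" "integrable M (\<lambda>w. (norm (pairing Y \<phi>2 w))\<^sup>2)"
    for Y
  proof (rule integral_dominated_convergence[where w = "\<lambda>w. C * ((norm (pairing Y \<phi>1 w))\<^sup>2 + (norm (pairing Y \<phi>2 w))\<^sup>2)"])
    show "integrable M (\<lambda>w. C * ((norm (pairing Y \<phi>1 w))\<^sup>2 + (norm (pairing Y \<phi>2 w))\<^sup>2))"
      using square by (intro integrable_mult_right Bochner_Integration.integrable_add)
    show "AE w in M. (\<lambda>n. g_n n (pairing Y \<phi>1 w, pairing Y \<phi>2 w)) \<longlonglongrightarrow> g (pairing Y \<phi>1 w, pairing Y \<phi>2 w)"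
      using g_n_tendsto by simp
    show "AE w in M. norm (g_n n (pairing Y \<phi>1 w, pairing Y \<phi>2 w))
        \<le> C * ((norm (pairing Y \<phi>1 w))\<^sup>2 + (norm (pairing Y \<phi>2 w))\<^sup>2)" for n
      by (intro AE_I2 order_trans[OF g_n_le growth])
  qed measurable
  from limit[OF X_measurable X1_square X2_square]
  have "(\<lambda>n. \<integral>w. g_n n (pairing X' \<phi>1 w, pairing X' \<phi>2 w) \<partial>M) \<longlonglongrightarrow> (\<integral>w. g (pairing X \<phi>1 w, pairing X \<phi>2 w) \<partial>M)"
    unfolding eq .
  from LIMSEQ_unique[OF this limit[OF X'_measurable X'1_square X'2_square]] show ?thesis .
qed

end

end

section \<open>Wavelet coefficients\<close>

lemma borel_measurable_cnj[measurable (raw)]: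
  assumes "f \<in> borel_measurable M"
  shows "(\<lambda>x. cnj (f x)) \<in> borel_measurable M"
  using continuous_on_cnj[OF continuous_on_id] assms by (rule borel_measurable_continuous_on)

lemma is_waveletD:
  fixes psi :: "real \<Rightarrow> complex"
  assumes "is_wavelet psi"
  shows "integrable lborel psi" "(\<integral>t. psi t \<partial>lborel) = 0"
    and "AE s in lborel. psi (- s) = cnj (psi s)"
  using assms real_fourier_imp_hermitian unfolding is_wavelet_def by auto

lemma psi_j_diff:
  fixes psi :: "real \<Rightarrow> complex"
  shows "psi_j psi j (T - u) = complex_of_real (2 powr (- real_of_int j))
    * psi (2 powr (- real_of_int j) * T + (- (2 powr (- real_of_int j))) * u)"
  unfolding psi_j_def by (simp add: algebra_simps)

lemma integrable_psi_j_diff: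
  fixes psi :: "real \<Rightarrow> complex"
  assumes "is_wavelet psi"
  shows "integrable lborel (\<lambda>u. psi_j psi j (T - u))"
  unfolding psi_j_diff
  by (intro integrable_mult_right lborel_integrable_real_affine is_waveletD[OF assms]) simp

lemma integral_psi_j_diff:
  fixes psi :: "real \<Rightarrow> complex"
  assumes "is_wavelet psi"
  shows "(\<integral>u. psi_j psi j (T - u) \<partial>lborel) = 0"
  using lborel_integral_real_affine[of "- (2 powr (- real_of_int j))" psi "2 powr (- real_of_int j) * T"]
    is_waveletD(2)[OF assms]
  unfolding psi_j_diff by simp

lemma psi_j_hermitian:
  fixes psi :: "real \<Rightarrow> complex"
  assumes "is_wavelet psi"
  shows "AE v in lborel. psi_j psi j (T + v) = cnj (psi_j psi j (- T - v))"
proof -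
  have [measurable]: "psi \<in> borel_measurable borel"
    using is_waveletD(1)[OF assms] by auto
  define c where "c = 2 powr (- real_of_int j)"
  have "AE v in lborel. psi (- (- c * T + - c * v)) = cnj (psi (- c * T + - c * v))"
    by (rule AE_borel_affine[OF _ _ is_waveletD(3)[OF assms]]) (simp add: c_def, measurable)
  then show ?thesis
  proof eventually_elim
    case (elim v)
    have arguments: "- c * T + - c * v = c * (- T - v)" "- (c * (- T - v)) = c * (T + v)"
      by (simp_all add: algebra_simps)
    from elim[unfolded arguments] show ?case unfolding psi_j_def c_def[symmetric] by simp
  qed
qed

lemma WX_eq_pairing: "WX X psi w t j = pairing X (\<lambda>u. psi_j psi j (t - u)) w"
  unfolding WX_def pairing_def ..

lemma pairing_reflection:
  fixes X :: "'a \<Rightarrow> real \<Rightarrow> real" and psi :: "real \<Rightarrow> complex"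
  assumes psi: "is_wavelet psi" and [measurable]: "jointly_measurable M X" and w: "w \<in> space M"
    and int: "integrable lborel (\<lambda>v. complex_of_real (X w v) * psi_j psi j (- T - v))"
  shows "integrable lborel (\<lambda>u. complex_of_real (X w (- u)) * psi_j psi j (T - u))"
    and "pairing (\<lambda>w t. X w (- t)) (\<lambda>u. psi_j psi j (T - u)) w = cnj (WX X psi w (- T) j)"
proof -
  have [measurable]: "psi \<in> borel_measurable borel" using is_waveletD(1)[OF psi] by auto
  define f where "f v = complex_of_real (X w v) * psi_j psi j (T + v)" for v
  have f_measurable: "f \<in> borel_measurable lborel" unfolding f_def psi_j_def using w by measurable
  have f_AE: "AE v in lborel. f v = cnj (complex_of_real (X w v) * psi_j psi j (- T - v))"
    using psi_j_hermitian[OF psi, of j T] by eventually_elim (simp add: f_def)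
  have "(\<lambda>v. cnj (complex_of_real (X w v) * psi_j psi j (- T - v))) \<in> borel_measurable lborel"
    unfolding psi_j_def using w by measurable
  note f_cong = integrable_cong_AE[OF f_measurable this f_AE] integral_cong_AE[OF f_measurable this f_AE]
  have "integrable lborel f"
    using f_cong(1) integrable_cnj[OF int] by blast
  have reflect: "(\<lambda>u. complex_of_real (X w (- u)) * psi_j psi j (T - u)) = (\<lambda>u. f (0 + (- 1) * u))"
    unfolding f_def by simp
  show "integrable lborel (\<lambda>u. complex_of_real (X w (- u)) * psi_j psi j (T - u))"
    unfolding reflect using \<open>integrable lborel f\<close> by (rule lborel_integrable_real_affine) simp
  have "pairing (\<lambda>w t. X w (- t)) (\<lambda>u. psi_j psi j (T - u)) w = (\<integral>v. f v \<partial>lborel)"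
    using lborel_integral_real_affine[of "- 1" f 0] unfolding pairing_def reflect by simp
  also have "\<dots> = (\<integral>v. cnj (complex_of_real (X w v) * psi_j psi j (- T - v)) \<partial>lborel)"
    by (rule f_cong(2))
  also have "\<dots> = cnj (WX X psi w (- T) j)"
    unfolding WX_def by (rule Bochner_Integration.integral_cnj)
  finally show "pairing (\<lambda>w t. X w (- t)) (\<lambda>u. psi_j psi j (T - u)) w = cnj (WX X psi w (- T) j)" .
qed

lemma pairing_increments:
  fixes X :: "'a \<Rightarrow> real \<Rightarrow> real" and psi :: "real \<Rightarrow> complex"
  assumes psi: "is_wavelet psi"
    and int: "integrable lborel (\<lambda>v. complex_of_real (X w v) * psi_j psi j (T + h - v))"
  shows "integrable lborel (\<lambda>u. complex_of_real (X w (u + h) - X w h) * psi_j psi j (T - u))"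
    and "pairing (\<lambda>w t. X w (t + h) - X w h) (\<lambda>u. psi_j psi j (T - u)) w = WX X psi w (T + h) j"
proof -
  define f where "f v = complex_of_real (X w v) * psi_j psi j (T + h - v)" for v
  have shift: "(\<lambda>u. complex_of_real (X w (u + h)) * psi_j psi j (T - u)) = (\<lambda>u. f (h + 1 * u))"
    unfolding f_def by (simp add: add.commute)
  have shifted: "integrable lborel (\<lambda>u. complex_of_real (X w (u + h)) * psi_j psi j (T - u))"
    unfolding shift using int unfolding f_def[symmetric] by (rule lborel_integrable_real_affine) simp
  have offset: "integrable lborel (\<lambda>u. complex_of_real (X w h) * psi_j psi j (T - u))"
    by (rule integrable_mult_right[OF integrable_psi_j_diff[OF psi]])
  have split: "complex_of_real (X w (u + h) - X w h) * psi_j psi j (T - u)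
      = complex_of_real (X w (u + h)) * psi_j psi j (T - u) - complex_of_real (X w h) * psi_j psi j (T - u)" for u
    by (simp add: algebra_simps)
  show "integrable lborel (\<lambda>u. complex_of_real (X w (u + h) - X w h) * psi_j psi j (T - u))"
    unfolding split using shifted offset by (rule Bochner_Integration.integrable_diff)
  have "(\<integral>u. complex_of_real (X w (u + h)) * psi_j psi j (T - u) \<partial>lborel) = WX X psi w (T + h) j"
    using lborel_integral_real_affine[of 1 f h] unfolding shift WX_def f_def by simp
  moreover have "(\<integral>u. complex_of_real (X w h) * psi_j psi j (T - u) \<partial>lborel) = 0"
    using integral_psi_j_diff[OF psi] by simp
  ultimately show "pairing (\<lambda>w t. X w (t + h) - X w h) (\<lambda>u. psi_j psi j (T - u)) w = WX X psi w (T + h) j"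
    unfolding pairing_def split Bochner_Integration.integral_diff[OF shifted offset] by simp
qed

lemma integral_WX_time_reversal:
  fixes X :: "'a \<Rightarrow> real \<Rightarrow> real" and psi :: "real \<Rightarrow> complex" and g :: "complex \<times> complex \<Rightarrow> complex"
  assumes M: "prob_space M" and X: "jointly_measurable M X"
    and reversible: "time_reversible M X" and psi: "is_wavelet psi"
    and pathwise: "\<And>w j t. w \<in> space M \<Longrightarrow> integrable lborel (\<lambda>u. complex_of_real (X w u) * psi_j psi j (t - u))"
    and square: "\<And>t j. integrable M (\<lambda>w. (cmod (WX X psi w t j))\<^sup>2)"
    and g: "continuous_on UNIV g" and growth: "\<And>a b. norm (g (a, b)) \<le> C * ((norm a)\<^sup>2 + (norm b)\<^sup>2)"
  shows "(\<integral>w. g (WX X psi w t j, WX X psi w t' j') \<partial>M)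
       = (\<integral>w. g (cnj (WX X psi w (- t) j), cnj (WX X psi w (- t') j')) \<partial>M)"
proof -
  have "jointly_measurable M (\<lambda>w t. X w (- t))" using X by measurable
  with M X reversible interpret equal_law_processes M X "\<lambda>w t. X w (- t)"
    unfolding time_reversible_def by (intro equal_law_processes.intro equal_law_processes_axioms.intro) auto
  have reflected: "pairing (\<lambda>w t. X w (- t)) (\<lambda>u. psi_j psi i (T - u)) w = cnj (WX X psi w (- T) i)"
    if "w \<in> space M" for w i T
    using pairing_reflection(2)[OF psi X that pathwise[OF that]] by simp
  have reflected_pathwise: "integrable lborel (\<lambda>u. complex_of_real (X w (- u)) * psi_j psi i (T - u))"
    if "w \<in> space M" for w i T
    using pairing_reflection(1)[OF psi X that pathwise[OF that]] by simp
  have square_X: "integrable M (\<lambda>w. (norm (pairing X (\<lambda>u. psi_j psi i (T - u)) w))\<^sup>2)" for i T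
    using square unfolding WX_eq_pairing by simp
  have square_reflected: "integrable M (\<lambda>w. (norm (pairing (\<lambda>w t. X w (- t)) (\<lambda>u. psi_j psi i (T - u)) w))\<^sup>2)"
    for i T
    using square[of "- T" i] by (rule Bochner_Integration.integrable_cong[THEN iffD1, rotated 2])
      (simp_all add: reflected)
  have "(\<integral>w. g (pairing X (\<lambda>u. psi_j psi j (t - u)) w, pairing X (\<lambda>u. psi_j psi j' (t' - u)) w) \<partial>M)
      = (\<integral>w. g (pairing (\<lambda>w t. X w (- t)) (\<lambda>u. psi_j psi j (t - u)) w,
                 pairing (\<lambda>w t. X w (- t)) (\<lambda>u. psi_j psi j' (t' - u)) w) \<partial>M)"
    by (rule integral_quadratic_growth_pairings_eq[OF integrable_psi_j_diff[OF psi] integrable_psi_j_diff[OF psi]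
        pathwise pathwise reflected_pathwise reflected_pathwise square_X square_X
        square_reflected square_reflected g growth])
  also have "\<dots> = (\<integral>w. g (cnj (WX X psi w (- t) j), cnj (WX X psi w (- t') j')) \<partial>M)"
    by (intro Bochner_Integration.integral_cong) (simp_all add: reflected)
  finally show ?thesis unfolding WX_eq_pairing .
qed

lemma integral_WX_shift:
  fixes X :: "'a \<Rightarrow> real \<Rightarrow> real" and psi :: "real \<Rightarrow> complex" and g :: "complex \<times> complex \<Rightarrow> complex"
  assumes M: "prob_space M" and X: "jointly_measurable M X"
    and stationary: "stationary_increments M X" and psi: "is_wavelet psi"
    and pathwise: "\<And>w j t. w \<in> space M \<Longrightarrow> integrable lborel (\<lambda>u. complex_of_real (X w u) * psi_j psi j (t - u))"
    and square: "\<And>t j. integrable M (\<lambda>w. (cmod (WX X psi w t j))\<^sup>2)"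
    and g: "continuous_on UNIV g" and growth: "\<And>a b. norm (g (a, b)) \<le> C * ((norm a)\<^sup>2 + (norm b)\<^sup>2)"
  shows "(\<integral>w. g (WX X psi w t j, WX X psi w t' j') \<partial>M)
       = (\<integral>w. g (WX X psi w (t + h) j, WX X psi w (t' + h) j') \<partial>M)"
proof -
  define Y where "Y s = (\<lambda>w t. X w (t + s) - X w s)" for s
  have "jointly_measurable M (Y s)" for s
    using X unfolding Y_def by measurable
  moreover have "process_law M (Y 0) = process_law M (Y h)"
    using stationary unfolding stationary_increments_def Y_def by metis
  ultimately interpret equal_law_processes M "Y 0" "Y h"
    using M by (intro equal_law_processes.intro equal_law_processes_axioms.intro) auto
  have shifted: "pairing (Y s) (\<lambda>u. psi_j psi i (T - u)) w = WX X psi w (T + s) i"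
    if "w \<in> space M" for s w i T
    using pairing_increments(2)[where X = X and w = w, OF psi pathwise[OF that, of i "T + s"]] by (simp add: Y_def)
  have shifted_pathwise: "integrable lborel (\<lambda>u. complex_of_real (Y s w u) * psi_j psi i (T - u))"
    if "w \<in> space M" for s w i T
    using pairing_increments(1)[where X = X and w = w, OF psi pathwise[OF that, of i "T + s"]] by (simp add: Y_def)
  have square_shifted: "integrable M (\<lambda>w. (norm (pairing (Y s) (\<lambda>u. psi_j psi i (T - u)) w))\<^sup>2)" for s i T
    using square[of "T + s" i] by (rule Bochner_Integration.integrable_cong[THEN iffD1, rotated 2])
      (simp_all add: shifted)
  have "(\<integral>w. g (pairing (Y 0) (\<lambda>u. psi_j psi j (t - u)) w, pairing (Y 0) (\<lambda>u. psi_j psi j' (t' - u)) w) \<partial>M)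
      = (\<integral>w. g (pairing (Y h) (\<lambda>u. psi_j psi j (t - u)) w, pairing (Y h) (\<lambda>u. psi_j psi j' (t' - u)) w) \<partial>M)"
    by (rule integral_quadratic_growth_pairings_eq[OF integrable_psi_j_diff[OF psi] integrable_psi_j_diff[OF psi]
        shifted_pathwise shifted_pathwise shifted_pathwise shifted_pathwise
        square_shifted square_shifted square_shifted square_shifted g growth])
  moreover have "(\<integral>w. g (pairing (Y s) (\<lambda>u. psi_j psi j (t - u)) w, pairing (Y s) (\<lambda>u. psi_j psi j' (t' - u)) w) \<partial>M)
      = (\<integral>w. g (WX X psi w (t + s) j, WX X psi w (t' + s) j') \<partial>M)" for s
    by (intro Bochner_Integration.integral_cong) (simp_all add: shifted)
  ultimately show ?thesis by simp
qed

lemma continuous_on_rho[continuous_intros]: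
  "continuous_on S f \<Longrightarrow> continuous_on S (\<lambda>x. rho k (f x))"
  unfolding rho_def by (cases "k = 1") (auto intro!: continuous_intros)

lemma norm_rho: "norm (rho k z) = norm z"
  unfolding rho_def by auto

lemma rho_cnj: "rho k (cnj z) = cnj (rho k z)"
  unfolding rho_def by auto

lemma norm_mult_le_sum_squares:
  fixes x y :: "'a::real_normed_field"
  shows "norm (x * y) \<le> (norm x)\<^sup>2 + (norm y)\<^sup>2"
proof -
  have "2 * (norm x * norm y) \<le> (norm x)\<^sup>2 + (norm y)\<^sup>2"
    using sum_squares_bound[of "norm x" "norm y"] by (simp add: mult.assoc)
  then show ?thesis
    using mult_nonneg_nonneg[OF norm_ge_zero[of x] norm_ge_zero[of y]] unfolding norm_mult by linarith
qed

theorem proposition2: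
  fixes M :: "'a measure" and X :: "'a \<Rightarrow> real \<Rightarrow> real" and psi :: "real \<Rightarrow> complex"
  assumes "prob_space M"
    and "(\<lambda>(w, t). X w t) \<in> borel_measurable (M \<Otimes>\<^sub>M lborel)"
    and "stationary_increments M X"
    and "is_wavelet psi"
    and "\<And>w j t. w \<in> space M \<Longrightarrow> integrable lborel (\<lambda>u. complex_of_real (X w u) * psi_j psi j (t - u))"
    and "\<And>t j. integrable M (\<lambda>w. (cmod (WX X psi w t j))\<^sup>2)"
    and "time_reversible M X"
    and "k \<in> {1, 2}" and "l \<in> {1, 2}"
  shows "(\<integral>w. rho k (WX X psi w t j) * cnj (rho l (WX X psi w (t - 2 powr real_of_int j * \<tau>) (j - a))) \<partial>M)
       = (\<integral>w. cnj (rho k (WX X psi w t j)) * rho l (WX X psi w (t + 2 powr real_of_int j * \<tau>) (j - a)) \<partial>M)"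
proof -
  define s where "s = 2 powr real_of_int j * \<tau>"
  define g where "g z = rho k (fst z) * cnj (rho l (snd z))" for z :: "complex \<times> complex"
  define g' where "g' z = cnj (rho k (fst z)) * rho l (snd z)" for z :: "complex \<times> complex"
  have continuous: "continuous_on UNIV g" "continuous_on UNIV g'"
    unfolding g_def[abs_def] g'_def[abs_def]
    by (intro continuous_intros)+
  have growth: "norm (g (x, y)) \<le> 1 * ((norm x)\<^sup>2 + (norm y)\<^sup>2)" "norm (g' (x, y)) \<le> 1 * ((norm x)\<^sup>2 + (norm y)\<^sup>2)"
    for x y
    using norm_mult_le_sum_squares[of "rho k x" "cnj (rho l y)"] norm_mult_le_sum_squares[of "cnj (rho k x)" "rho l y"]
    by (simp_all add: g_def g'_def norm_rho)
  have "(\<integral>w. g (WX X psi w t j, WX X psi w (t - s) (j - a)) \<partial>M)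
      = (\<integral>w. g (cnj (WX X psi w (- t) j), cnj (WX X psi w (- (t - s)) (j - a))) \<partial>M)"
    by (rule integral_WX_time_reversal[OF assms(1,2,7,4,5,6) continuous(1) growth(1)])
  also have "\<dots> = (\<integral>w. g' (WX X psi w (- t) j, WX X psi w (- (t - s)) (j - a)) \<partial>M)"
    by (simp add: g_def g'_def rho_cnj)
  also have "\<dots> = (\<integral>w. g' (WX X psi w (- t + 2 * t) j, WX X psi w (- (t - s) + 2 * t) (j - a)) \<partial>M)"
    by (rule integral_WX_shift[OF assms(1,2,3,4,5,6) continuous(2) growth(2)])
  finally show ?thesis
    by (simp add: g_def g'_def s_def algebra_simps)
qed

end
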